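(* Let $p$ be a prime, $R$ an $F$-pure ring of characteristic $p$, and $f\in R$ a non-zero non-unit. Then for every integer $d\ge1$, \[ p^d\,\langle \operatorname{fpt}(f)\rangle_d = \max\{a\in\mathbb{N} : R\cdot f^{a/p^d}\subseteq R^{1/p^d}\text{ splits over }R\}. \]
   Context: A ring $R$ of characteristic $p$ is $F$-pure if $R\subseteq R^{1/p}$ splits as a map of $R$-modules; such a ring is reduced. Roots. $R^{1/p^e}$ is the ring of formal symbols $r^{1/p^e}$ ($r\in R$), with $r^{1/p^e}+s^{1/p^e}=(r+s)^{1/p^e}$ and $r^{1/p^e}s^{1/p^e}=(rs)^{1/p^e}$. It contains $R$ via $r\mapsto(r^{p^e})^{1/p^e}$. Powers of $f$. $f^{a/p^e}:=(f^a)^{1/p^e}$. Splitting. For $t \in R^{1/p^e}$, the inclusion $R\cdot t\subseteq R^{1/p^e}$ splits over $R$ if some $R$-linear $\theta:R^{1/p^e}\to R$ has $\theta(t)=1$. $F$-pure threshold. $(R,f^\lambda)$ is $F$-pure if $R\cdot f^{\lfloor (p^e-1)\lambda\rfloor/p^e}\subseteq R^{1/p^e}$ splits for all $e\ge1$. $\operatorname{fpt}(f)$ is the supremum of $\lambda\ge 0$ with $(R,f^\lambda)$ $F$-pure; it lies in $[0,1]$. Base $p$ expansions. For $\alpha\in(0,1]$, its non-terminating base $p$ expansion is the unique expression $\alpha=\sum_{e\ge1}a_e/p^e$ with integers $0\le a_e\le p-1$ not all eventually zero. The $e$-th truncation is $\langle\alpha\rangle_e:=\sum_{i=1}^e a_i/p^i$.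 By convention $\langle 0\rangle_e=0$. *)

theory Defs
  imports Complex_Main "HOL-Computational_Algebra.Primes"
begin

text \<open>The R-module R^{1/p^e} is modelled by a copy of R: the formal symbol r^{1/p^e}
  is represented by r itself. Addition/multiplication of symbols is that of R, and
  the R-module structure is  s . r^{1/p^e} = (s^{p^e} r)^{1/p^e}.
  Hence an R-linear map R^{1/p^e} -> R is an additive map theta : R -> R with
  theta (s^(p^e) * r) = s * theta r.\<close>

definition root_linear :: "nat \<Rightarrow> nat \<Rightarrow> ('a::comm_ring_1 \<Rightarrow> 'a) \<Rightarrow> bool" where
  "root_linear p e \<theta> \<longleftrightarrow>
     (\<forall>x y. \<theta> (x + y) = \<theta> x + \<theta> y) \<and> (\<forall>s r. \<theta> (s ^ (p ^ e) * r) = s * \<theta> r)"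

text \<open>For t = u^{1/p^e} (represented by u), R.t \<subseteq> R^{1/p^e} splits.\<close>
definition root_splits :: "nat \<Rightarrow> nat \<Rightarrow> 'a::comm_ring_1 \<Rightarrow> bool" where
  "root_splits p e u \<longleftrightarrow> (\<exists>\<theta>. root_linear p e \<theta> \<and> \<theta> u = 1)"

text \<open>F-pure: the inclusion R -> R^{1/p}, r |-> (r^p)^{1/p}, splits.\<close>
definition F_pure_ring :: "nat \<Rightarrow> 'a::comm_ring_1 itself \<Rightarrow> bool" where
  "F_pure_ring p _ \<longleftrightarrow> (\<exists>\<theta>::'a \<Rightarrow> 'a. root_linear p 1 \<theta> \<and> (\<forall>r. \<theta> (r ^ p) = r))"

definition F_pure_pair :: "nat \<Rightarrow> 'a::comm_ring_1 \<Rightarrow> real \<Rightarrow> bool" where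
  "F_pure_pair p f lam \<longleftrightarrow>
     (\<forall>e\<ge>1. root_splits p e (f ^ nat \<lfloor>(real (p ^ e) - 1) * lam\<rfloor>))"

definition fpt :: "nat \<Rightarrow> 'a::comm_ring_1 \<Rightarrow> real" where
  "fpt p f = Sup {lam. lam \<ge> 0 \<and> F_pure_pair p f lam}"

text \<open>Non-terminating base p expansion: alpha = sum_{e>=1} a_e / p^e, 0 <= a_e <= p-1,
  not eventually zero (index 0 unused, set to 0).\<close>
definition nonterm_expansion :: "nat \<Rightarrow> real \<Rightarrow> (nat \<Rightarrow> nat) \<Rightarrow> bool" where
  "nonterm_expansion p \<alpha> a \<longleftrightarrow>
     a 0 = 0 \<and> (\<forall>i. a i \<le> p - 1) \<and> (\<forall>N. \<exists>i>N. a i \<noteq> 0) \<and>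
     (\<lambda>i. real (a i) / real p ^ i) sums \<alpha>"

definition trunc :: "nat \<Rightarrow> real \<Rightarrow> nat \<Rightarrow> real" where
  "trunc p \<alpha> e = (if \<alpha> = 0 then 0 else
     (let a = (THE a. nonterm_expansion p \<alpha> a) in \<Sum>i=1..e. real (a i) / real p ^ i))"

end

theory Submission
  imports Defs
begin

text \<open>Let \<open>\<nu>(e)\<close> be the largest \<open>a\<close> for which \<open>f^{a/p^e}\<close> splits (it exists and is \<open>< p^e\<close> since
  \<open>f\<close> is a non-unit). Composing splittings gives \<open>\<nu>(e) p^j \<le> \<nu>(e+j)\<close>; conversely, a splitting of
  \<open>f^{b/p^{e+j}}\<close> restricted along the \<open>p^j\<close>-th power map (additive in characteristic \<open>p\<close>) gives a
  splitting of \<open>f^{\<lfloor>b/p^j\<rfloor>/p^e}\<close>, so \<open>\<nu>(e+j) < (\<nu>(e)+1) p^j\<close>. Hence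
  \<open>\<nu>(e)/p^e \<le> fpt(f) \<le> (\<nu>(e)+1)/p^e\<close>, and the first inequality is strict once some \<open>\<nu>(k) \<ge> 1\<close>.
  The differences \<open>\<nu>(e) - p \<nu>(e-1)\<close> are therefore base \<open>p\<close> digits of \<open>fpt(f)\<close>, not eventually zero,
  so by uniqueness of non-terminating expansions they are the digits, and \<open>p^e \<langle>fpt(f)\<rangle>_e = \<nu>(e)\<close>.\<close>

section \<open>Splittings of roots\<close>

lemma root_linear_comp:
  fixes \<theta> \<psi> :: "'a::comm_ring_1 \<Rightarrow> 'a"
  assumes "root_linear p e \<theta>" "root_linear p k \<psi>"
  shows "root_linear p (e + k) (\<theta> \<circ> \<psi>)"
proof -
  have "\<theta> (\<psi> (s ^ (p ^ (e + k)) * r)) = s * \<theta> (\<psi> r)" for s r :: 'a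
  proof -
    have "s ^ (p ^ (e + k)) = (s ^ (p ^ e)) ^ (p ^ k)" by (simp add: power_add power_mult)
    then have "\<psi> (s ^ (p ^ (e + k)) * r) = s ^ (p ^ e) * \<psi> r"
      using assms(2) by (simp add: root_linear_def)
    then show ?thesis using assms(1) by (simp add: root_linear_def)
  qed
  then show ?thesis using assms by (simp add: root_linear_def)
qed

lemma root_splits_mult_power:
  fixes u v :: "'a::comm_ring_1"
  assumes "root_splits p e u" "root_splits p k v"
  shows "root_splits p (e + k) (u ^ (p ^ k) * v)"
proof -
  obtain \<theta> where \<theta>: "root_linear p e \<theta>" "\<theta> u = 1" using assms(1) root_splits_def by blast
  obtain \<psi> where \<psi>: "root_linear p k \<psi>" "\<psi> v = 1" using assms(2) root_splits_def by blast
  have "(\<theta> \<circ> \<psi>) (u ^ (p ^ k) * v) = 1"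
    using \<theta> \<psi> by (simp add: root_linear_def)
  then show ?thesis using root_linear_comp[OF \<theta>(1) \<psi>(1)] root_splits_def by blast
qed

lemma root_splits_one:
  assumes "F_pure_ring p TYPE('a::comm_ring_1)"
  shows "root_splits p e (1::'a)"
proof (induction e)
  case 0
  have "root_linear p 0 (id::'a \<Rightarrow> 'a)" by (simp add: root_linear_def)
  then show ?case unfolding root_splits_def by (intro exI[of _ id]) simp
next
  case (Suc e)
  obtain \<theta> :: "'a \<Rightarrow> 'a" where \<theta>: "root_linear p 1 \<theta>" "\<forall>r. \<theta> (r ^ p) = r"
    using assms F_pure_ring_def by blast
  have "\<theta> 1 = 1" using \<theta>(2) by (metis power_one)
  then have "root_splits p 1 (1::'a)" using \<theta>(1) root_splits_def by blast
  from root_splits_mult_power[OF Suc this] show ?case by simp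
qed

lemma root_splits_mult_left:
  fixes u v :: "'a::comm_ring_1"
  assumes "root_splits p e (u * v)"
  shows "root_splits p e u"
proof -
  obtain \<theta> where \<theta>: "root_linear p e \<theta>" "\<theta> (u * v) = 1" using assms root_splits_def by blast
  have "root_linear p e (\<lambda>x. \<theta> (x * v))"
    using \<theta>(1) unfolding root_linear_def by (simp add: distrib_right mult.assoc)
  then show ?thesis using \<theta>(2) root_splits_def by blast
qed

lemma root_splits_power_mono:
  fixes f :: "'a::comm_ring_1"
  assumes "root_splits p e (f ^ a)" "b \<le> a"
  shows "root_splits p e (f ^ b)"
proof -
  have "f ^ a = f ^ b * f ^ (a - b)" using assms(2) by (simp flip: power_add)
  then show ?thesis using assms(1) root_splits_mult_left by metis
qed

lemma root_splits_power_div: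
  fixes f :: "'a::comm_ring_1"
  assumes "prime p" "CHAR('a) = p" "root_splits p (e + j) (f ^ b)"
  shows "root_splits p e (f ^ (b div p ^ j))"
proof -
  obtain \<psi> where \<psi>: "root_linear p (e + j) \<psi>" "\<psi> (f ^ b) = 1"
    using assms(3) root_splits_def by blast
  define \<theta> where "\<theta> x = \<psi> (x ^ (p ^ j) * f ^ (b mod p ^ j))" for x
  have frobenius_add: "(x + y) ^ (p ^ j) = x ^ (p ^ j) + y ^ (p ^ j)" for x y :: 'a
    using freshmans_dream'[where m="p ^ j" and n=j and x=x and y=y] assms by simp
  have "root_linear p e \<theta>"
    unfolding root_linear_def
  proof (intro conjI allI)
    fix x y show "\<theta> (x + y) = \<theta> x + \<theta> y"
      using \<psi>(1) unfolding \<theta>_def root_linear_def by (simp add: frobenius_add distrib_right)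
  next
    fix s r :: 'a
    have "(s ^ p ^ e * r) ^ p ^ j * f ^ (b mod p ^ j)
        = s ^ p ^ (e + j) * (r ^ p ^ j * f ^ (b mod p ^ j))"
      by (simp add: power_mult_distrib power_add power_mult mult.assoc)
    then show "\<theta> (s ^ p ^ e * r) = s * \<theta> r"
      using \<psi>(1) unfolding \<theta>_def root_linear_def by simp
  qed
  moreover have "\<theta> (f ^ (b div p ^ j)) = 1"
  proof -
    have "(f ^ (b div p ^ j)) ^ p ^ j * f ^ (b mod p ^ j) = f ^ b"
      by (simp flip: power_mult power_add del: div_mult_mod_eq add: div_mult_mod_eq)
    then show ?thesis using \<psi>(2) \<theta>_def by simp
  qed
  ultimately show ?thesis using root_splits_def by blast
qed

lemma root_splits_power_less:
  fixes f :: "'a::comm_ring_1"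
  assumes "root_splits p e (f ^ a)" "\<not> f dvd 1"
  shows "a < p ^ e"
proof (rule ccontr)
  assume "\<not> a < p ^ e"
  obtain \<theta> where \<theta>: "root_linear p e \<theta>" "\<theta> (f ^ a) = 1" using assms(1) root_splits_def by blast
  have "f ^ a = f ^ (p ^ e) * f ^ (a - p ^ e)" using \<open>\<not> a < p ^ e\<close> by (simp flip: power_add)
  then have "1 = f * \<theta> (f ^ (a - p ^ e))" using \<theta> unfolding root_linear_def by metis
  then show False using assms(2) by (metis dvdI)
qed

section \<open>Non-terminating base \<open>p\<close> expansions\<close>

lemma nonterm_expansion_partial_sum_bounds:
  assumes p: "p \<ge> 2" and exp: "nonterm_expansion p \<alpha> b"
  shows "(\<Sum>i=1..e. real (b i) / real p ^ i) < \<alpha>"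
    and "\<alpha> \<le> (\<Sum>i=1..e. real (b i) / real p ^ i) + 1 / real p ^ e"
proof -
  let ?q = "real p"
  define g where "g i = real (b i) / ?q ^ i" for i
  have b0: "b 0 = 0" and digit: "\<And>i. b i \<le> p - 1" and nz: "\<And>N. \<exists>i>N. b i \<noteq> 0"
    and sums: "g sums \<alpha>"
    using exp unfolding nonterm_expansion_def g_def by auto
  have "{..<Suc e} = insert 0 {1..e}" by auto
  then have partial: "(\<Sum>i=1..e. g i) = (\<Sum>i<Suc e. g i)" by (simp add: g_def b0)
  define t where "t n = g (n + Suc e)" for n
  have tail: "t sums (\<alpha> - (\<Sum>i=1..e. g i))"
    unfolding t_def partial by (rule sums_split_initial_segment[OF sums])
  have "0 \<le> t n" for n unfolding t_def g_def by simp
  moreover obtain i where "i > e" "b i \<noteq> 0" using nz by blast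
  then have "0 < t (i - Suc e)" using p unfolding t_def g_def by auto
  ultimately have "0 < \<alpha> - (\<Sum>i=1..e. g i)"
    using suminf_pos2[OF sums_summable[OF tail]] sums_unique[OF tail] by auto
  then show "(\<Sum>i=1..e. real (b i) / ?q ^ i) < \<alpha>" unfolding g_def by simp
  define c where "c = (?q - 1) / ?q ^ Suc e"
  have geometric: "(\<lambda>n. c * (1/?q) ^ n) sums (1 / ?q ^ e)"
  proof -
    have "(\<lambda>n. c * (1/?q) ^ n) sums (c * (1 / (1 - 1/?q)))"
      using geometric_sums[of "1/?q"] p by (intro sums_mult) auto
    moreover have "c * (1 / (1 - 1/?q)) = 1 / ?q ^ e"
      using p unfolding c_def by (simp add: field_simps)
    ultimately show ?thesis by simp
  qed
  have "t n \<le> c * (1/?q) ^ n" for n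
  proof -
    have "real (b (n + Suc e)) \<le> ?q - 1" using digit[of "n + Suc e"] p by (simp add: of_nat_diff)
    moreover have "c * (1/?q) ^ n = (?q - 1) / ?q ^ (n + Suc e)"
      unfolding c_def by (simp add: power_add power_divide)
    ultimately show ?thesis unfolding t_def g_def using p by (simp add: divide_right_mono)
  qed
  then have "\<alpha> - (\<Sum>i=1..e. g i) \<le> 1 / ?q ^ e" using sums_le[OF _ tail geometric] by blast
  then show "\<alpha> \<le> (\<Sum>i=1..e. real (b i) / ?q ^ i) + 1 / ?q ^ e" unfolding g_def by simp
qed

lemma nonterm_expansion_unique:
  assumes p: "p \<ge> 2" and "nonterm_expansion p \<alpha> b" "nonterm_expansion p \<alpha> c"
  shows "b = c"
proof (rule ccontr)
  let ?q = "real p"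
  have first_digit_less: False
    if b: "nonterm_expansion p \<alpha> b" and c: "nonterm_expansion p \<alpha> c"
      and less: "b i < c i" and agree: "\<forall>j<i. b j = c j" for b c i
  proof -
    have "b 0 = 0" "c 0 = 0" using b c unfolding nonterm_expansion_def by auto
    then obtain m where m: "i = Suc m" using less by (cases i) auto
    have "(\<Sum>k=1..m. real (b k) / ?q ^ k) = (\<Sum>k=1..m. real (c k) / ?q ^ k)"
      using agree m by (intro sum.cong) auto
    moreover have "real (b i) / ?q ^ i + 1 / ?q ^ i \<le> real (c i) / ?q ^ i"
      using less p by (simp add: add_divide_distrib[symmetric] divide_right_mono)
    ultimately have "(\<Sum>k=1..i. real (b k) / ?q ^ k) + 1 / ?q ^ i \<le> (\<Sum>k=1..i. real (c k) / ?q ^ k)"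
      using m by simp
    then show False
      using nonterm_expansion_partial_sum_bounds[OF p b, of i]
        nonterm_expansion_partial_sum_bounds[OF p c, of i] by simp
  qed
  assume "b \<noteq> c"
  then obtain i where "b i \<noteq> c i" and "\<forall>j<i. b j = c j"
    using exists_least_iff[of "\<lambda>i. b i \<noteq> c i"] by fastforce
  then show False using first_digit_less assms(2,3) by (metis linorder_neqE_nat)
qed

definition approximant_digit :: "nat \<Rightarrow> (nat \<Rightarrow> nat) \<Rightarrow> nat \<Rightarrow> nat" where
  "approximant_digit p \<nu> i = (if i = 0 then 0 else \<nu> i - \<nu> (i - 1) * p)"

locale base_p_approximants =
  fixes p :: nat and \<nu> :: "nat \<Rightarrow> nat" and \<alpha> :: real
  assumes base: "p \<ge> 2" and zero: "\<nu> 0 = 0"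
    and step_lower: "\<And>e. \<nu> e * p \<le> \<nu> (Suc e)"
    and step_upper: "\<And>e. \<nu> (Suc e) < (\<nu> e + 1) * p"
    and below: "\<And>e. real (\<nu> e) / real p ^ e < \<alpha>"
    and above: "\<And>e. \<alpha> \<le> (real (\<nu> e) + 1) / real p ^ e"
begin

lemma partial_sum_digits:
  "(\<Sum>i=1..n. real (approximant_digit p \<nu> i) / real p ^ i) = real (\<nu> n) / real p ^ n"
proof -
  have "(\<Sum>i<Suc n. real (approximant_digit p \<nu> i) / real p ^ i) = real (\<nu> n) / real p ^ n"
  proof (induction n)
    case 0 then show ?case by (simp add: approximant_digit_def zero)
  next
    case (Suc n)
    have "real (approximant_digit p \<nu> (Suc n)) = real (\<nu> (Suc n)) - real (\<nu> n) * real p"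
      using step_lower[of n] by (simp add: approximant_digit_def of_nat_diff)
    then show ?case using Suc base by (simp add: field_simps)
  qed
  moreover have "{..<Suc n} = insert 0 {1..n}" by auto
  ultimately show ?thesis by (simp add: approximant_digit_def)
qed

lemma approximants_tendsto: "(\<lambda>n. real (\<nu> n) / real p ^ n) \<longlonglongrightarrow> \<alpha>"
proof (rule tendsto_sandwich[of "\<lambda>n. \<alpha> - (1 / real p) ^ n" _ _ "\<lambda>n. \<alpha>"])
  have "\<alpha> - (1 / real p) ^ n \<le> real (\<nu> n) / real p ^ n" for n
    using above[of n] by (simp add: power_divide add_divide_distrib)
  then show "\<forall>\<^sub>F n in sequentially. \<alpha> - (1 / real p) ^ n \<le> real (\<nu> n) / real p ^ n"
    by (intro always_eventually) auto
  show "\<forall>\<^sub>F n in sequentially. real (\<nu> n) / real p ^ n \<le> \<alpha>"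
    using below by (intro always_eventually) (auto intro: less_imp_le)
  have "(\<lambda>n. (1 / real p) ^ n) \<longlonglongrightarrow> 0" using base by (intro LIMSEQ_realpow_zero) auto
  then show "(\<lambda>n. \<alpha> - (1 / real p) ^ n) \<longlonglongrightarrow> \<alpha>"
    using tendsto_diff[OF tendsto_const[of \<alpha>]] by fastforce
qed simp

lemma digits_not_eventually_zero: "\<exists>i>N. approximant_digit p \<nu> i \<noteq> 0"
proof (rule ccontr)
  let ?q = "real p"
  assume "\<not> (\<exists>i>N. approximant_digit p \<nu> i \<noteq> 0)"
  then have zero_digit: "approximant_digit p \<nu> (Suc (N + m)) = 0" for m by auto
  have "\<nu> (N + m) = \<nu> N * p ^ m" for m
  proof (induction m)
    case (Suc m)
    have "\<nu> (Suc (N + m)) = \<nu> (N + m) * p"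
      using step_lower[of "N + m"] zero_digit[of m] by (simp add: approximant_digit_def)
    then show ?case using Suc by simp
  qed simp
  then have stuck: "real (\<nu> (N + m)) / ?q ^ (N + m) = real (\<nu> N) / ?q ^ N" for m
    using base by (simp add: power_add)
  define gap where "gap = \<alpha> - real (\<nu> N) / ?q ^ N"
  have "gap > 0" using below[of N] gap_def by simp
  obtain m where "1 / gap < ?q ^ m" using real_arch_pow[of ?q "1 / gap"] base by auto
  then have m: "1 / ?q ^ m < gap" using \<open>gap > 0\<close> base by (simp add: field_simps)
  have "\<alpha> \<le> real (\<nu> N) / ?q ^ N + 1 / ?q ^ (N + m)"
    using above[of "N + m"] stuck[of m] by (simp add: add_divide_distrib)
  moreover have "1 / ?q ^ (N + m) \<le> 1 / ?q ^ m"
    using base by (intro divide_left_mono power_increasing) auto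
  ultimately show False using m gap_def by simp
qed

lemma nonterm_expansion_digits: "nonterm_expansion p \<alpha> (approximant_digit p \<nu>)"
proof -
  have "(\<lambda>n. \<Sum>i<Suc n. real (approximant_digit p \<nu> i) / real p ^ i) \<longlonglongrightarrow> \<alpha>"
    using approximants_tendsto partial_sum_digits
    by (simp add: atLeast1_atMost_eq_remove0 lessThan_Suc_atMost sum.remove[of "{..n}" 0 for n]
        approximant_digit_def)
  then have "(\<lambda>i. real (approximant_digit p \<nu> i) / real p ^ i) sums \<alpha>"
    unfolding sums_def by (rule LIMSEQ_imp_Suc)
  moreover have "approximant_digit p \<nu> i \<le> p - 1" for i
  proof (cases i)
    case (Suc j)
    have "\<nu> (Suc j) < \<nu> j * p + p" using step_upper[of j] by (simp add: distrib_right)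
    then show ?thesis unfolding Suc approximant_digit_def by simp
  qed (simp add: approximant_digit_def)
  ultimately show ?thesis
    unfolding nonterm_expansion_def using digits_not_eventually_zero
    by (simp add: approximant_digit_def)
qed

lemma scaled_trunc_eq: "real p ^ d * trunc p \<alpha> d = real (\<nu> d)"
proof -
  have "(THE b. nonterm_expansion p \<alpha> b) = approximant_digit p \<nu>"
    using nonterm_expansion_digits nonterm_expansion_unique[OF base] by blast
  moreover have "\<alpha> \<noteq> 0" using below[of 0] by auto
  ultimately have "trunc p \<alpha> d = real (\<nu> d) / real p ^ d"
    unfolding trunc_def Let_def using partial_sum_digits by simp
  then show ?thesis using base by simp
qed

end

section \<open>The splitting numbers of \<open>f\<close> and the \<open>F\<close>-pure threshold\<close>

definition splitting_number :: "nat \<Rightarrow> 'a::comm_ring_1 \<Rightarrow> nat \<Rightarrow> nat" where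
  "splitting_number p f e = Max {a. root_splits p e (f ^ a)}"

locale F_pure_nonunit =
  fixes p :: nat and f :: "'a::comm_ring_1"
  assumes prime: "prime p" and char: "CHAR('a) = p" and F_pure: "F_pure_ring p TYPE('a)"
    and nonunit: "\<not> f dvd 1"
begin

abbreviation \<nu> :: "nat \<Rightarrow> nat" where "\<nu> \<equiv> splitting_number p f"

lemma root_splits_iff_le: "root_splits p e (f ^ a) \<longleftrightarrow> a \<le> \<nu> e"
proof -
  let ?S = "{a. root_splits p e (f ^ a)}"
  have "finite ?S"
    using root_splits_power_less[OF _ nonunit] finite_subset[of ?S "{..<p ^ e}"] by blast
  moreover have "0 \<in> ?S" using root_splits_one[OF F_pure] by simp
  ultimately have "\<nu> e \<in> ?S" and "\<And>a. a \<in> ?S \<Longrightarrow> a \<le> \<nu> e"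
    unfolding splitting_number_def using Max_in Max_ge by blast+
  then show ?thesis using root_splits_power_mono by blast
qed

lemma splitting_number_less: "\<nu> e < p ^ e"
  using root_splits_power_less[OF _ nonunit] root_splits_iff_le by blast

lemma splitting_number_lower: "\<nu> e * p ^ j \<le> \<nu> (e + j)"
proof -
  have "root_splits p (e + j) ((f ^ \<nu> e) ^ (p ^ j) * 1)"
    using root_splits_mult_power root_splits_iff_le root_splits_one[OF F_pure] by blast
  then show ?thesis using root_splits_iff_le by (simp flip: power_mult)
qed

lemma splitting_number_upper: "\<nu> (e + j) < (\<nu> e + 1) * p ^ j"
proof -
  have "\<nu> (e + j) div p ^ j \<le> \<nu> e"
    using root_splits_power_div[OF prime char] root_splits_iff_le by blast
  moreover have "p ^ j > 0" using prime prime_gt_0_nat by simp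
  ultimately show ?thesis
    by (metis add_le_mono1 div_less_iff_less_mult less_Suc_eq_le plus_1_eq_Suc add.commute)
qed

lemma splitting_number_jump:
  assumes "\<nu> k \<ge> 1"
  shows "\<nu> e * p ^ k + 1 \<le> \<nu> (e + k)"
proof -
  have "root_splits p (e + k) ((f ^ \<nu> e) ^ (p ^ k) * f ^ 1)"
    using assms root_splits_mult_power root_splits_iff_le by blast
  moreover have "(f ^ \<nu> e) ^ (p ^ k) * f ^ 1 = f ^ (\<nu> e * p ^ k + 1)"
    by (simp add: power_add power_mult)
  ultimately show ?thesis using root_splits_iff_le by metis
qed

lemma F_pure_pair_iff:
  "F_pure_pair p f lam \<longleftrightarrow> (\<forall>e\<ge>1. (real p ^ e - 1) * lam < real (\<nu> e) + 1)"
  unfolding F_pure_pair_def root_splits_iff_le by (simp add: nat_le_iff floor_le_iff)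

lemma base_gt_1: "real p > 1" using prime prime_gt_1_nat by simp

lemma F_pure_pair_le:
  assumes "F_pure_pair p f lam"
  shows "lam * real p ^ e \<le> real (\<nu> e) + 1"
proof (rule ccontr)
  let ?q = "real p"
  assume exceeds: "\<not> ?thesis"
  define \<delta> where "\<delta> = lam * ?q ^ e - (real (\<nu> e) + 1)"
  have "\<delta> > 0" using exceeds \<delta>_def by simp
  obtain n where "lam / \<delta> < ?q ^ n" using real_arch_pow[OF base_gt_1] by blast
  then have "lam < \<delta> * ?q ^ n" using \<open>\<delta> > 0\<close> by (simp add: pos_divide_less_eq mult.commute)
  also have "\<dots> \<le> \<delta> * ?q ^ Suc n"
    using \<open>\<delta> > 0\<close> base_gt_1 by (intro mult_left_mono) (auto intro: power_increasing)
  finally have "lam < \<delta> * ?q ^ Suc n" .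
  moreover have "(?q ^ (e + Suc n) - 1) * lam < real (\<nu> (e + Suc n)) + 1"
    using assms F_pure_pair_iff by auto
  moreover have "real (\<nu> (e + Suc n) + 1) \<le> real ((\<nu> e + 1) * p ^ Suc n)"
    using splitting_number_upper[of e "Suc n"] by linarith
  then have "real (\<nu> (e + Suc n)) + 1 \<le> (real (\<nu> e) + 1) * ?q ^ Suc n"
    by (simp add: algebra_simps)
  moreover have "(?q ^ (e + Suc n) - 1) * lam = (\<delta> + real (\<nu> e) + 1) * ?q ^ Suc n - lam"
    unfolding \<delta>_def by (simp add: power_add algebra_simps)
  ultimately show False by (simp add: algebra_simps)
qed

lemma F_pure_pair_approximant: "F_pure_pair p f (real (\<nu> e) / real p ^ e)"
  unfolding F_pure_pair_iff
proof (intro allI impI)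
  let ?q = "real p" and ?v = "real (\<nu> e)"
  fix e' :: nat
  have "(?q ^ e' - 1) * (?v / ?q ^ e) \<le> ?q ^ e' * (?v / ?q ^ e)"
    by (intro mult_right_mono) auto
  moreover have "?q ^ e' * (?v / ?q ^ e) < real (\<nu> e') + 1"
  proof (cases "e \<le> e'")
    case True
    then obtain j where j: "e' = e + j" using le_Suc_ex by blast
    have "real (\<nu> e * p ^ j) \<le> real (\<nu> e')"
      using splitting_number_lower[of e j] j by (simp only: of_nat_le_iff)
    then have "?v * ?q ^ j \<le> real (\<nu> e')" by simp
    moreover have "?q ^ e' * (?v / ?q ^ e) = ?v * ?q ^ j"
      using base_gt_1 j by (simp add: power_add field_simps)
    ultimately show ?thesis by linarith
  next
    case False
    then obtain j where j: "e = e' + j" using le_Suc_ex[of e' e] by auto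
    have "real (\<nu> e) < real ((\<nu> e' + 1) * p ^ j)"
      using splitting_number_upper[of e' j] j by (simp only: of_nat_less_iff)
    then have "?v < (real (\<nu> e') + 1) * ?q ^ j" by (simp add: algebra_simps)
    then have "?v / ?q ^ j < real (\<nu> e') + 1" using base_gt_1 by (simp add: pos_divide_less_eq)
    moreover have "?q ^ e' * (?v / ?q ^ e) = ?v / ?q ^ j"
      using base_gt_1 j by (simp add: power_add field_simps)
    ultimately show ?thesis by linarith
  qed
  ultimately show "(?q ^ e' - 1) * (?v / ?q ^ e) < real (\<nu> e') + 1" by linarith
qed

lemma approximant_le_fpt: "real (\<nu> e) / real p ^ e \<le> fpt p f"
proof -
  have "bdd_above {lam. lam \<ge> 0 \<and> F_pure_pair p f lam}"
    using F_pure_pair_le[of _ 0] splitting_number_less[of 0] by (intro bdd_aboveI[of _ 1]) auto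
  then show ?thesis
    unfolding fpt_def using F_pure_pair_approximant by (intro cSup_upper) auto
qed

lemma fpt_le_approximant: "fpt p f \<le> (real (\<nu> e) + 1) / real p ^ e"
  unfolding fpt_def
proof (rule cSup_least)
  show "{lam. lam \<ge> 0 \<and> F_pure_pair p f lam} \<noteq> {}" using F_pure_pair_approximant by fastforce
  show "lam \<le> (real (\<nu> e) + 1) / real p ^ e" if "lam \<in> {lam. lam \<ge> 0 \<and> F_pure_pair p f lam}" for lam
    using that F_pure_pair_le[of lam e] base_gt_1 by (simp add: pos_le_divide_eq)
qed

lemma approximant_less_fpt:
  assumes "\<nu> k \<ge> 1"
  shows "real (\<nu> e) / real p ^ e < fpt p f"
proof -
  let ?q = "real p"
  have "real (\<nu> e * p ^ k + 1) \<le> real (\<nu> (e + k))"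
    using splitting_number_jump[OF assms, of e] by (simp only: of_nat_le_iff)
  then have "real (\<nu> e) * ?q ^ k + 1 \<le> real (\<nu> (e + k))" by simp
  then have "(real (\<nu> e) * ?q ^ k + 1) / ?q ^ (e + k) \<le> real (\<nu> (e + k)) / ?q ^ (e + k)"
    using base_gt_1 by (intro divide_right_mono) auto
  moreover have "real (\<nu> e) / ?q ^ e < (real (\<nu> e) * ?q ^ k + 1) / ?q ^ (e + k)"
    using base_gt_1 by (simp add: power_add field_simps)
  ultimately show ?thesis using approximant_le_fpt[of "e + k"] by linarith
qed

lemma fpt_eq_0_if_splitting_numbers_0:
  assumes "\<And>e. \<nu> e = 0"
  shows "fpt p f = 0"
proof -
  have "fpt p f \<le> 1 / real p ^ e" for e using fpt_le_approximant[of e] assms by simp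
  then have "fpt p f \<le> 0"
    using LIMSEQ_le_const[OF LIMSEQ_realpow_zero[of "1 / real p"]] base_gt_1
    by (simp add: power_one_over)
  then show ?thesis using approximant_le_fpt[of 0] assms by simp
qed

theorem scaled_trunc_fpt: "real p ^ d * trunc p (fpt p f) d = real (\<nu> d)"
proof (cases "\<exists>k. \<nu> k \<ge> 1")
  case True
  then obtain k where "\<nu> k \<ge> 1" by blast
  interpret base_p_approximants p \<nu> "fpt p f"
  proof
    show "p \<ge> 2" using prime prime_ge_2_nat by blast
    show "\<nu> 0 = 0" using splitting_number_less[of 0] by simp
  qed (use splitting_number_lower[of _ 1] splitting_number_upper[of _ 1]
       approximant_less_fpt[OF \<open>\<nu> k \<ge> 1\<close>] fpt_le_approximant in auto)
  show ?thesis by (rule scaled_trunc_eq)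
next
  case False
  then have "\<nu> e = 0" for e by (meson less_one not_le)
  then show ?thesis using fpt_eq_0_if_splitting_numbers_0 by (simp add: trunc_def)
qed

end

theorem mainTheorem3:
  fixes p :: nat and f :: "'a::comm_ring_1" and d :: nat
  assumes "prime p"
    and "CHAR('a) = p"
    and "F_pure_ring p TYPE('a)"
    and "f \<noteq> 0" and "\<not> f dvd 1"
    and "d \<ge> 1"
  shows "real p ^ d * trunc p (fpt p f) d = real (Max {a::nat. root_splits p d (f ^ a)})"
proof -
  interpret F_pure_nonunit p f using assms by unfold_locales auto
  show ?thesis using scaled_trunc_fpt[of d] unfolding splitting_number_def .
qed

end
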